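(* Let $\mathcal{X}\subset\mathbb{R}^d$ be a compact metric space, $\mathcal{Y}\subset\mathbb{R}$, and let $(X,Y)$ be distributed according to a probability measure $\rho$ on $\mathcal{X}\times\mathcal{Y}$ with marginal $\rho_{\mathcal{X}}$. Let $f^\star(x)=\mathbb{E}(Y\mid X=x)$ be bounded, let $\mathcal{H}\subset C(\mathcal{X})$ be uniformly bounded, and set $M=\max\{\|f^\star\|_\infty,\sup_{f\in\mathcal{H}}\|f\|_\infty\}$. Assume there is $\epsilon>0$ with $\mathbb{E}|Y|^{1+\epsilon}<+\infty$, and let $\sigma>\max\{2M,1\}$. Then there exist positive constants $c_1,c_2$, independent of $\sigma$ and of $f$, such that for every measurable $f:\mathcal{X}\to\mathbb{R}$ with $\|f\|_\infty\le M$, the random variable $\xi(x,y)=\ell_\sigma(y-f(x))-\ell_\sigma(y-f^\star(x))$ satisfies \[ \mathbb{E}\xi^2\le c_1\|f-f^\star\|_{2,\rho}^{\frac{2(\epsilon-1)_+}{\epsilon+1}}+c_2\sigma^{1-\epsilon}. \]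
   Context: The Huber loss with scale parameter $\sigma>0$ is $\ell_\sigma(t)=t^2$ if $|t|\le\sigma$ and $\ell_\sigma(t)=2\sigma|t|-\sigma^2$ otherwise. $\|g\|_{2,\rho}$ is the $L^2(\rho_{\mathcal{X}})$ norm. For $t\in\mathbb{R}$, $t_+=\max(0,t)$. The expectation is over $(X,Y)\sim\rho$. *)

theory Defs
  imports "HOL-Probability.Probability"
begin

definition huber :: "real \<Rightarrow> real \<Rightarrow> real" where
  "huber \<sigma> t = (if \<bar>t\<bar> \<le> \<sigma> then t\<^sup>2 else 2 * \<sigma> * \<bar>t\<bar> - \<sigma>\<^sup>2)"

definition L2_norm_marg :: "('a \<times> real) measure \<Rightarrow> ('a \<Rightarrow> real) \<Rightarrow> real" where
  "L2_norm_marg \<rho> g = sqrt (\<integral> z. (g (fst z))\<^sup>2 \<partial>\<rho>)"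

definition pos_part :: "real \<Rightarrow> real" where
  "pos_part t = max 0 t"

end

theory Submission
  imports Defs
begin

text \<open>
  On residuals bounded by W, the Huber loss with scale \<sigma> is Lipschitz with constant
  2 min(\<sigma>, W). Taking W = 2 max(|y|, M), which dominates both residuals, gives
  \<xi>^2 \<le> 4 min(\<sigma>, W)^2 (f - f*)^2 with (f - f*)^2 \<le> 4 M^2, and W^(1+\<epsilon>) is integrable
  by the moment assumption. For \<epsilon> \<le> 1 interpolate min(\<sigma>, W)^2 \<le> \<sigma>^(1-\<epsilon>) W^(1+\<epsilon>).
  For \<epsilon> > 1 split W^2 \<le> T^2 + T^(1-\<epsilon>) W^(1+\<epsilon>) at a level T > 0; the choice
  T = \<parallel>f - f*\<parallel>^(-2/(1+\<epsilon>)) makes both integrated terms equal to \<parallel>f - f*\<parallel>^(2(\<epsilon>-1)/(\<epsilon>+1)).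
\<close>

lemma huber_abs [simp]: "huber s \<bar>t\<bar> = huber s t"
  by (simp add: huber_def)

lemma huber_increment_le:
  fixes s u u' W :: real
  assumes "0 \<le> u" "u \<le> u'" "u' \<le> W"
  shows "huber s u' - huber s u \<le> 2 * min s W * (u' - u)"
proof -
  consider "u' \<le> s" | "u \<le> s" "s < u'" | "s < u"
    by linarith
  then show ?thesis
  proof cases
    case 1
    then have "u' + u \<le> 2 * min s W"
      using assms by linarith
    then have "(u' - u) * (u' + u) \<le> (u' - u) * (2 * min s W)"
      using assms by (intro mult_left_mono) auto
    then show ?thesis
      using 1 assms by (simp add: huber_def power2_eq_square algebra_simps)
  next
    case 2
    have "0 \<le> (s - u)\<^sup>2" by simp
    then show ?thesis
      using 2 assms by (simp add: huber_def power2_eq_square algebra_simps)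
  next
    case 3
    then show ?thesis
      using assms by (simp add: huber_def algebra_simps)
  qed
qed

lemma huber_mono:
  fixes s u u' :: real
  assumes "0 < s" "0 \<le> u" "u \<le> u'"
  shows "huber s u \<le> huber s u'"
proof -
  consider "u' \<le> s" | "u \<le> s" "s < u'" | "s < u"
    by linarith
  then show ?thesis
  proof cases
    case 1
    then show ?thesis
      using assms by (simp add: huber_def power_mono)
  next
    case 2
    have "u\<^sup>2 \<le> s\<^sup>2"
      using 2 assms by (simp add: power_mono)
    moreover have "s\<^sup>2 \<le> s * u'"
      using 2 assms by (simp add: power2_eq_square)
    moreover have "huber s u = u\<^sup>2" "huber s u' = 2 * s * u' - s\<^sup>2"
      using 2 assms by (simp_all add: huber_def)
    ultimately show ?thesis
      by linarith
  next
    case 3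
    then show ?thesis
      using assms by (simp add: huber_def)
  qed
qed

lemma huber_lipschitz:
  fixes s a b W :: real
  assumes "0 < s" "\<bar>a\<bar> \<le> W" "\<bar>b\<bar> \<le> W"
  shows "\<bar>huber s a - huber s b\<bar> \<le> 2 * min s W * \<bar>a - b\<bar>"
proof -
  have "\<bar>huber s \<bar>a\<bar> - huber s \<bar>b\<bar>\<bar> \<le> 2 * min s W * \<bar>\<bar>a\<bar> - \<bar>b\<bar>\<bar>"
  proof (cases "\<bar>b\<bar> \<le> \<bar>a\<bar>")
    case True
    then show ?thesis
      using huber_increment_le[of "\<bar>b\<bar>" "\<bar>a\<bar>" W s] huber_mono[of s "\<bar>b\<bar>" "\<bar>a\<bar>"] assms
      by simp
  next
    case False
    then show ?thesis
      using huber_increment_le[of "\<bar>a\<bar>" "\<bar>b\<bar>" W s] huber_mono[of s "\<bar>a\<bar>" "\<bar>b\<bar>"] assms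
      by simp
  qed
  also have "\<dots> \<le> 2 * min s W * \<bar>a - b\<bar>"
    using assms by (intro mult_left_mono) auto
  finally show ?thesis
    by simp
qed

lemma min_sq_le_powr:
  fixes e s w :: real
  assumes "\<bar>e\<bar> \<le> 1" "0 < s" "0 \<le> w"
  shows "(min s w)\<^sup>2 \<le> s powr (1 - e) * w powr (1 + e)"
proof (cases "w = 0")
  case True
  then show ?thesis
    using assms by simp
next
  case False
  define m where "m = min s w"
  have "m > 0"
    using assms False by (simp add: m_def)
  then have "m\<^sup>2 = m powr (1 - e) * m powr (1 + e)"
    by (simp add: powr_add[symmetric])
  also have "\<dots> \<le> s powr (1 - e) * w powr (1 + e)"
    using \<open>m > 0\<close> assms by (intro mult_mono powr_mono2) (auto simp: m_def)
  finally show ?thesis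
    by (simp add: m_def)
qed

lemma sq_le_sq_add_powr:
  fixes e T v :: real
  assumes "1 \<le> e" "0 < T" "0 \<le> v"
  shows "v\<^sup>2 \<le> T\<^sup>2 + T powr (1 - e) * v powr (1 + e)"
proof (cases "v \<le> T")
  case True
  then show ?thesis
    using assms by (simp add: power_mono add_increasing2)
next
  case False
  then have "v\<^sup>2 = v powr (1 - e) * v powr (1 + e)"
    using assms by (simp add: powr_add[symmetric])
  also have "\<dots> \<le> T powr (1 - e) * v powr (1 + e)"
    using False assms by (intro mult_right_mono powr_mono2') auto
  finally show ?thesis
    by (simp add: add_increasing)
qed

lemma powr_truncation_balance:
  fixes e N :: real
  assumes "0 < e" "0 < N"
  defines "T \<equiv> N powr (- 2 / (1 + e))"
  shows "T\<^sup>2 * N\<^sup>2 = N powr (2 * (e - 1) / (e + 1))"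
    and "T powr (1 - e) = N powr (2 * (e - 1) / (e + 1))"
proof -
  have "T\<^sup>2 = N powr (- 2 / (1 + e) * 2)" "N\<^sup>2 = N powr 2"
    using assms by (simp_all add: T_def powr_powr flip: powr_numeral)
  then have "T\<^sup>2 * N\<^sup>2 = N powr (- 2 / (1 + e) * 2 + 2)"
    by (simp only: powr_add)
  also have "- 2 / (1 + e) * 2 + 2 = 2 * (e - 1) / (e + 1)"
    using assms by (simp add: field_simps)
  finally show "T\<^sup>2 * N\<^sup>2 = N powr (2 * (e - 1) / (e + 1))" .
  have "T powr (1 - e) = N powr (- 2 / (1 + e) * (1 - e))"
    by (simp add: T_def powr_powr)
  also have "- 2 / (1 + e) * (1 - e) = 2 * (e - 1) / (e + 1)"
    using assms by (simp add: field_simps)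
  finally show "T powr (1 - e) = N powr (2 * (e - 1) / (e + 1))" .
qed

lemma huber_diff_sq_le:
  fixes s y p q W :: real
  assumes "0 < s" "\<bar>y - p\<bar> \<le> W" "\<bar>y - q\<bar> \<le> W"
  shows "(huber s (y - p) - huber s (y - q))\<^sup>2 \<le> 4 * (min s W)\<^sup>2 * (p - q)\<^sup>2"
proof -
  have "\<bar>huber s (y - p) - huber s (y - q)\<bar> \<le> 2 * min s W * \<bar>p - q\<bar>"
    using huber_lipschitz[OF assms] by (simp add: abs_minus_commute)
  then have "(huber s (y - p) - huber s (y - q))\<^sup>2 \<le> (2 * min s W * \<bar>p - q\<bar>)\<^sup>2"
    by (metis abs_ge_zero power2_abs power_mono)
  then show ?thesis
    by (simp add: power_mult_distrib)
qed

lemma huber_diff_sq_le_powr: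
  fixes s e y p q W B :: real
  assumes "0 < s" "\<bar>e\<bar> \<le> 1" "\<bar>y - p\<bar> \<le> W" "\<bar>y - q\<bar> \<le> W" "\<bar>p - q\<bar> \<le> B"
  shows "(huber s (y - p) - huber s (y - q))\<^sup>2 \<le> 4 * B\<^sup>2 * s powr (1 - e) * W powr (1 + e)"
proof -
  have "W \<ge> 0"
    using assms by linarith
  have "(p - q)\<^sup>2 \<le> B\<^sup>2"
    using assms(5) by (metis abs_ge_zero power2_abs power_mono)
  have "(huber s (y - p) - huber s (y - q))\<^sup>2 \<le> 4 * (min s W)\<^sup>2 * (p - q)\<^sup>2"
    using huber_diff_sq_le assms by blast
  also have "\<dots> \<le> 4 * (s powr (1 - e) * W powr (1 + e)) * B\<^sup>2"
    using min_sq_le_powr[OF assms(2,1) \<open>W \<ge> 0\<close>] \<open>(p - q)\<^sup>2 \<le> B\<^sup>2\<close>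
    by (intro mult_mono) auto
  finally show ?thesis
    by (simp add: ac_simps)
qed

lemma huber_diff_sq_le_truncated:
  fixes s e T y p q W B :: real
  assumes "0 < s" "1 \<le> e" "0 < T" "\<bar>y - p\<bar> \<le> W" "\<bar>y - q\<bar> \<le> W" "\<bar>p - q\<bar> \<le> B"
  shows "(huber s (y - p) - huber s (y - q))\<^sup>2
    \<le> 4 * T\<^sup>2 * (p - q)\<^sup>2 + 4 * B\<^sup>2 * T powr (1 - e) * W powr (1 + e)"
proof -
  have "W \<ge> 0"
    using assms by linarith
  have "(p - q)\<^sup>2 \<le> B\<^sup>2"
    using assms(6) by (metis abs_ge_zero power2_abs power_mono)
  have "(min s W)\<^sup>2 \<le> W\<^sup>2"
    using \<open>W \<ge> 0\<close> assms(1) by (intro power_mono) auto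
  then have min_le: "(min s W)\<^sup>2 \<le> T\<^sup>2 + T powr (1 - e) * W powr (1 + e)"
    using sq_le_sq_add_powr[OF assms(2,3) \<open>W \<ge> 0\<close>] by linarith
  have "(huber s (y - p) - huber s (y - q))\<^sup>2 \<le> 4 * (min s W)\<^sup>2 * (p - q)\<^sup>2"
    using huber_diff_sq_le assms by blast
  also have "\<dots> \<le> 4 * (T\<^sup>2 + T powr (1 - e) * W powr (1 + e)) * (p - q)\<^sup>2"
    using min_le by (simp add: mult_right_mono)
  also have "\<dots> \<le> 4 * T\<^sup>2 * (p - q)\<^sup>2 + 4 * (T powr (1 - e) * W powr (1 + e)) * B\<^sup>2"
    using \<open>(p - q)\<^sup>2 \<le> B\<^sup>2\<close> by (simp add: distrib_left distrib_right mult_left_mono)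
  finally show ?thesis
    by (simp add: ac_simps)
qed

lemma (in finite_measure) integrable_max_abs_powr:
  fixes Y :: "'a \<Rightarrow> real" and c r :: real
  assumes Y_int: "integrable M (\<lambda>z. \<bar>Y z\<bar> powr r)" and [measurable]: "Y \<in> borel_measurable M"
  shows "integrable M (\<lambda>z. max \<bar>Y z\<bar> c powr r)"
proof (rule Bochner_Integration.integrable_bound)
  show "integrable M (\<lambda>z. \<bar>Y z\<bar> powr r + \<bar>c\<bar> powr r)"
    using Y_int by simp
  show "AE z in M. norm (max \<bar>Y z\<bar> c powr r) \<le> norm (\<bar>Y z\<bar> powr r + \<bar>c\<bar> powr r)"
    by (intro AE_I2) (auto simp: max_def)
qed measurable

lemma integral_huber_diff_sq_le_powr:
  fixes \<mu> :: "'a measure" and Y p q W :: "'a \<Rightarrow> real" and s e B :: real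
  assumes "0 < s" "\<bar>e\<bar> \<le> 1"
    and W_int: "integrable \<mu> (\<lambda>z. W z powr (1 + e))"
    and bounds: "AE z in \<mu>. \<bar>Y z - p z\<bar> \<le> W z \<and> \<bar>Y z - q z\<bar> \<le> W z \<and> \<bar>p z - q z\<bar> \<le> B"
  shows "(\<integral>z. (huber s (Y z - p z) - huber s (Y z - q z))\<^sup>2 \<partial>\<mu>)
    \<le> 4 * B\<^sup>2 * (\<integral>z. W z powr (1 + e) \<partial>\<mu>) * s powr (1 - e)"
proof -
  let ?c = "4 * B\<^sup>2 * s powr (1 - e)"
  have "AE z in \<mu>. (huber s (Y z - p z) - huber s (Y z - q z))\<^sup>2 \<le> ?c * W z powr (1 + e)"
    using bounds by eventually_elim (intro huber_diff_sq_le_powr[OF assms(1,2)], auto)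
  then have "(\<integral>z. (huber s (Y z - p z) - huber s (Y z - q z))\<^sup>2 \<partial>\<mu>) \<le> (\<integral>z. ?c * W z powr (1 + e) \<partial>\<mu>)"
    using W_int by (intro integral_mono_AE') auto
  then show ?thesis
    by (simp add: ac_simps)
qed

lemma integral_huber_diff_sq_le_truncated:
  fixes \<mu> :: "'a measure" and Y p q W :: "'a \<Rightarrow> real" and s e T B :: real
  assumes "0 < s" "1 \<le> e" "0 < T"
    and W_int: "integrable \<mu> (\<lambda>z. W z powr (1 + e))"
    and sq_int: "integrable \<mu> (\<lambda>z. (p z - q z)\<^sup>2)"
    and bounds: "AE z in \<mu>. \<bar>Y z - p z\<bar> \<le> W z \<and> \<bar>Y z - q z\<bar> \<le> W z \<and> \<bar>p z - q z\<bar> \<le> B"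
  shows "(\<integral>z. (huber s (Y z - p z) - huber s (Y z - q z))\<^sup>2 \<partial>\<mu>)
    \<le> 4 * T\<^sup>2 * (\<integral>z. (p z - q z)\<^sup>2 \<partial>\<mu>) + 4 * B\<^sup>2 * (\<integral>z. W z powr (1 + e) \<partial>\<mu>) * T powr (1 - e)"
proof -
  have "AE z in \<mu>. (huber s (Y z - p z) - huber s (Y z - q z))\<^sup>2
      \<le> 4 * T\<^sup>2 * (p z - q z)\<^sup>2 + 4 * B\<^sup>2 * T powr (1 - e) * W z powr (1 + e)"
    using bounds by eventually_elim (intro huber_diff_sq_le_truncated[OF assms(1-3)], auto)
  then have "(\<integral>z. (huber s (Y z - p z) - huber s (Y z - q z))\<^sup>2 \<partial>\<mu>)
      \<le> (\<integral>z. 4 * T\<^sup>2 * (p z - q z)\<^sup>2 + 4 * B\<^sup>2 * T powr (1 - e) * W z powr (1 + e) \<partial>\<mu>)"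
    using sq_int W_int by (intro integral_mono_AE') auto
  then show ?thesis
    using sq_int W_int by (simp add: ac_simps)
qed

lemma (in finite_measure) integral_huber_diff_sq_le_L2_powr:
  fixes Y p q W :: "'a \<Rightarrow> real" and s e B :: real
  assumes "0 < s" "1 \<le> e"
    and W_int: "integrable M (\<lambda>z. W z powr (1 + e))"
    and pq_meas: "(\<lambda>z. p z - q z) \<in> borel_measurable M"
    and bounds: "AE z in M. \<bar>Y z - p z\<bar> \<le> W z \<and> \<bar>Y z - q z\<bar> \<le> W z \<and> \<bar>p z - q z\<bar> \<le> B"
  shows "(\<integral>z. (huber s (Y z - p z) - huber s (Y z - q z))\<^sup>2 \<partial>M)
    \<le> (4 + 4 * B\<^sup>2 * (\<integral>z. W z powr (1 + e) \<partial>M))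
        * sqrt (\<integral>z. (p z - q z)\<^sup>2 \<partial>M) powr (2 * (e - 1) / (e + 1))"
    (is "?lhs \<le> (4 + 4 * B\<^sup>2 * ?EW) * ?N powr ?r")
proof -
  have "AE z in M. norm ((p z - q z)\<^sup>2) \<le> B\<^sup>2"
    using bounds
  proof eventually_elim
    case (elim z)
    then have "\<bar>p z - q z\<bar> \<le> \<bar>B\<bar>"
      by linarith
    then show ?case
      by (simp add: abs_le_square_iff)
  qed
  then have sq_int: "integrable M (\<lambda>z. (p z - q z)\<^sup>2)"
    using borel_measurable_power[OF pq_meas] by (rule integrable_const_bound)
  have N_sq: "?N\<^sup>2 = (\<integral>z. (p z - q z)\<^sup>2 \<partial>M)"
    by (simp add: integral_nonneg_AE)
  show ?thesis
  proof (cases "?N = 0")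
    case True
    then have "AE z in M. (p z - q z)\<^sup>2 = 0"
      using sq_int N_sq by (simp add: integral_nonneg_eq_0_iff_AE)
    then have "?lhs = 0"
      by (auto intro!: integral_eq_zero_AE elim!: eventually_mono)
    then show ?thesis
      by (simp add: integral_nonneg_AE)
  next
    case False
    moreover have "0 \<le> ?N"
      by (simp add: integral_nonneg_AE)
    ultimately have "?N > 0"
      by linarith
    define T where "T = ?N powr (- 2 / (1 + e))"
    have "T > 0"
      using \<open>?N > 0\<close> by (simp add: T_def)
    have "?lhs \<le> 4 * (T\<^sup>2 * ?N\<^sup>2) + 4 * B\<^sup>2 * ?EW * T powr (1 - e)"
      using integral_huber_diff_sq_le_truncated[OF assms(1,2) \<open>T > 0\<close> W_int sq_int bounds]
      by (simp add: N_sq)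
    also have "\<dots> = (4 + 4 * B\<^sup>2 * ?EW) * ?N powr ?r"
      using powr_truncation_balance[of e ?N] \<open>1 \<le> e\<close> \<open>?N > 0\<close>
      unfolding T_def by (simp only:) (simp add: distrib_right)
    finally show ?thesis .
  qed
qed

lemma (in finite_measure) integral_huber_diff_sq_le:
  fixes Y p q W :: "'a \<Rightarrow> real" and s e B :: real
  assumes "0 < s" "0 < e"
    and W_int: "integrable M (\<lambda>z. W z powr (1 + e))"
    and pq_meas: "(\<lambda>z. p z - q z) \<in> borel_measurable M"
    and bounds: "AE z in M. \<bar>Y z - p z\<bar> \<le> W z \<and> \<bar>Y z - q z\<bar> \<le> W z \<and> \<bar>p z - q z\<bar> \<le> B"
  defines "K \<equiv> 4 * B\<^sup>2 * (\<integral>z. W z powr (1 + e) \<partial>M)"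
  shows "(\<integral>z. (huber s (Y z - p z) - huber s (Y z - q z))\<^sup>2 \<partial>M)
    \<le> (4 + K) * sqrt (\<integral>z. (p z - q z)\<^sup>2 \<partial>M) powr (2 * pos_part (e - 1) / (e + 1))
      + (1 + K) * s powr (1 - e)"
proof -
  have "0 \<le> K"
    by (simp add: K_def integral_nonneg_AE)
  show ?thesis
  proof (cases "e \<le> 1")
    case True
    then have "(\<integral>z. (huber s (Y z - p z) - huber s (Y z - q z))\<^sup>2 \<partial>M) \<le> K * s powr (1 - e)"
      using integral_huber_diff_sq_le_powr[OF \<open>0 < s\<close> _ W_int bounds] \<open>0 < e\<close>
      by (simp add: K_def)
    also have "\<dots> \<le> (1 + K) * s powr (1 - e)"
      by (simp add: mult_right_mono)
    finally show ?thesis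
      using \<open>0 \<le> K\<close> by (simp add: add_increasing)
  next
    case False
    then have "(\<integral>z. (huber s (Y z - p z) - huber s (Y z - q z))\<^sup>2 \<partial>M)
        \<le> (4 + K) * sqrt (\<integral>z. (p z - q z)\<^sup>2 \<partial>M) powr (2 * pos_part (e - 1) / (e + 1))"
      using integral_huber_diff_sq_le_L2_powr[OF \<open>0 < s\<close> _ W_int pq_meas bounds]
      by (simp add: K_def pos_part_def)
    then show ?thesis
      using \<open>0 \<le> K\<close> by (simp add: add_increasing2)
  qed
qed

lemma abs_le_Sup_abs_values:
  fixes f :: "'b \<Rightarrow> real" and H :: "('b \<Rightarrow> real) set"
  assumes "\<exists>B. \<forall>x\<in>X. \<bar>f x\<bar> \<le> B" "\<exists>B. \<forall>h\<in>H. \<forall>x\<in>X. \<bar>h x\<bar> \<le> B" "x \<in> X"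
  shows "\<bar>f x\<bar> \<le> Sup ({\<bar>f x\<bar> | x. x \<in> X} \<union> {\<bar>h x\<bar> | h x. h \<in> H \<and> x \<in> X})"
proof (rule cSup_upper)
  obtain B1 B2 where "\<forall>x\<in>X. \<bar>f x\<bar> \<le> B1" "\<forall>h\<in>H. \<forall>x\<in>X. \<bar>h x\<bar> \<le> B2"
    using assms(1,2) by blast
  then show "bdd_above ({\<bar>f x\<bar> | x. x \<in> X} \<union> {\<bar>h x\<bar> | h x. h \<in> H \<and> x \<in> X})"
    by (intro bdd_aboveI[of _ "max B1 B2"]) fastforce
qed (use assms(3) in blast)

lemma abs_residuals_le:
  fixes y a b M :: real
  assumes "\<bar>a\<bar> \<le> M" "\<bar>b\<bar> \<le> M"
  shows "\<bar>y - a\<bar> \<le> 2 * max \<bar>y\<bar> M" "\<bar>y - b\<bar> \<le> 2 * max \<bar>y\<bar> M" "\<bar>a - b\<bar> \<le> 2 * M"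
  using assms by (auto simp: abs_if max_def split: if_splits)

theorem theorem2:
  fixes \<rho> :: "((real^('d::finite)) \<times> real) measure"
    and X :: "(real^'d) set"
    and fstar :: "real^'d \<Rightarrow> real"
    and H :: "(real^'d \<Rightarrow> real) set"
    and \<epsilon> :: real
  assumes prob: "prob_space \<rho>"
    and sets_rho: "sets \<rho> = sets borel"
    and X_compact: "compact X"
    and supp: "AE z in \<rho>. fst z \<in> X"
    and fstar_meas: "fstar \<in> borel_measurable borel"
    and fstar_cond: "AE z in \<rho>. fstar (fst z) =
           real_cond_exp \<rho> (vimage_algebra (space \<rho>) fst borel) snd z"
    and fstar_bdd: "\<exists>B. \<forall>x\<in>X. \<bar>fstar x\<bar> \<le> B"
    and H_cont: "\<forall>h\<in>H. continuous_on X h"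
    and H_bdd: "\<exists>B. \<forall>h\<in>H. \<forall>x\<in>X. \<bar>h x\<bar> \<le> B"
    and eps_pos: "\<epsilon> > 0"
    and moment: "integrable \<rho> (\<lambda>z. \<bar>snd z\<bar> powr (1 + \<epsilon>))"
  defines "M \<equiv> Sup ({\<bar>fstar x\<bar> | x. x \<in> X} \<union> {\<bar>h x\<bar> | h x. h \<in> H \<and> x \<in> X})"
  shows "\<exists>c1 c2. c1 > 0 \<and> c2 > 0 \<and>
    (\<forall>\<sigma> f. \<sigma> > max (2 * M) 1 \<longrightarrow> f \<in> borel_measurable borel \<longrightarrow> (\<forall>x\<in>X. \<bar>f x\<bar> \<le> M) \<longrightarrow>
      (\<integral> z. (huber \<sigma> (snd z - f (fst z)) - huber \<sigma> (snd z - fstar (fst z)))\<^sup>2 \<partial>\<rho>)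
        \<le> c1 * (L2_norm_marg \<rho> (\<lambda>x. f x - fstar x)) powr (2 * pos_part (\<epsilon> - 1) / (\<epsilon> + 1))
           + c2 * \<sigma> powr (1 - \<epsilon>))"
proof -
  interpret prob_space \<rho>
    by (rule prob)
  have [measurable]: "fst \<in> borel_measurable \<rho>" "snd \<in> borel_measurable \<rho>"
    unfolding measurable_cong_sets[OF sets_rho refl] by (simp_all flip: borel_prod)
  note [measurable] = fstar_meas
  have fstar_le_M: "\<bar>fstar x\<bar> \<le> M" if "x \<in> X" for x
    unfolding M_def using abs_le_Sup_abs_values[OF fstar_bdd H_bdd that] .
  define W where "W z = 2 * max \<bar>snd z\<bar> M" for z :: "(real^'d) \<times> real"
  have W_int: "integrable \<rho> (\<lambda>z. W z powr (1 + \<epsilon>))"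
    using integrable_mult_right[OF integrable_max_abs_powr[OF moment, of M], of "2 powr (1 + \<epsilon>)"]
    by (simp add: W_def powr_mult)
  define K where "K = 4 * (2 * M)\<^sup>2 * (\<integral>z. W z powr (1 + \<epsilon>) \<partial>\<rho>)"
  have "0 \<le> K"
    by (simp add: K_def integral_nonneg_AE)
  show ?thesis
  proof (intro exI conjI allI impI)
    fix \<sigma> :: real and f :: "real^'d \<Rightarrow> real"
    assume "\<sigma> > max (2 * M) 1" and [measurable]: "f \<in> borel_measurable borel"
      and f_le_M: "\<forall>x\<in>X. \<bar>f x\<bar> \<le> M"
    have "AE z in \<rho>. \<bar>snd z - f (fst z)\<bar> \<le> W z \<and> \<bar>snd z - fstar (fst z)\<bar> \<le> W z
        \<and> \<bar>f (fst z) - fstar (fst z)\<bar> \<le> 2 * M"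
      using supp
    proof eventually_elim
      case (elim z)
      then show ?case
        using abs_residuals_le[OF f_le_M[rule_format, OF elim] fstar_le_M[OF elim]] by (simp add: W_def)
    qed
    from integral_huber_diff_sq_le[OF _ eps_pos W_int _ this] \<open>\<sigma> > max (2 * M) 1\<close>
    show "(\<integral>z. (huber \<sigma> (snd z - f (fst z)) - huber \<sigma> (snd z - fstar (fst z)))\<^sup>2 \<partial>\<rho>)
        \<le> (4 + K) * L2_norm_marg \<rho> (\<lambda>x. f x - fstar x) powr (2 * pos_part (\<epsilon> - 1) / (\<epsilon> + 1))
          + (1 + K) * \<sigma> powr (1 - \<epsilon>)"
      by (simp add: L2_norm_marg_def K_def)
  qed (use \<open>0 \<le> K\<close> in auto)
qed

end
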